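(* Let $\Psi$ be proper closed convex, $F=\frac1n\sum_{i=1}^nF_i$ with $F_i(x)=\mathbb{E}_{\xi_i\sim\mathcal{D}_i}[F_{\xi_i}(x)]$, and $x^*$ a solution of $\langle F(x^* ),x-x^*\rangle+\Psi(x)-\Psi(x^* )\ge0$ for all $x$. Let $K\ge0$, $\beta\in(0,1]$, $0<\gamma\le\frac{1}{\sqrt{12}L}$, $V\ge\|x^0-x^*\|^2+\frac{409600\gamma^2\ln^2\frac{48n(K+1)}{\beta}}{n^2}\sum_{i=1}^n\|F_i(x^* )\|^2$, $Q=B_{4n\sqrt V}(x^* )$, and assume $\|F_i(x)-F_i(y)\|\le L\|x-y\|$ for all $x,y\in Q$, $i\in[n]$, and $F$ is monotone on $Q$. Consider DProx-clipped-SEG-shift (arbitrary initial shifts, $\nu$, $\lambda_k$). If $x^k,\tilde x^k\in Q$ for all $k=0,1,\dots,K$, then for all $u\in B_{4n\sqrt V}(x^* )$ $$\langle F(u),\tilde x^K_{\mathrm{avg}}-u\rangle+\Psi(\tilde x^K_{\mathrm{avg}})-\Psi(u)\le\frac{\|x^0-u\|^2-\|x^{K+1}-u\|^2}{2\gamma(K+1)}+\frac{\gamma}{K+1}\sum_{k=0}^K\left(3\|\omega_k\|^2+4\|\theta_k\|^2\right)+\frac1{K+1}\sum_{k=0}^K\langle\theta_k,x^k-u\rangle,$$ where $\tilde x^K_{\mathrm{avg}}=\frac1{K+1}\sum_{k=0}^K\tilde x^k$, $\theta_k=F(\tilde x^k)-\hat g^k$ and $\omega_k=F(x^k)-\tilde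 g^k$.
   Context: $\mathrm{prox}$ and $\mathrm{clip}(y,\lambda)=\min\{1,\lambda/\|y\|\}y$ ($\mathrm{clip}(0,\lambda)=0$) as usual. DProx-clipped-SEG-shift: $\tilde x^k=\mathrm{prox}_{\gamma\Psi}(x^k-\gamma\tilde g^k)$, $\tilde g^k=\frac1n\sum_i\tilde g_i^k$, $\tilde g_i^k=\tilde h_i^k+\tilde\Delta_i^k$, $\tilde h_i^{k+1}=\tilde h_i^k+\nu\tilde\Delta_i^k$, $\tilde\Delta_i^k=\mathrm{clip}(F_{\xi^k_{1,i}}(x^k)-\tilde h_i^k,\lambda_k)$; $x^{k+1}=\mathrm{prox}_{\gamma\Psi}(x^k-\gamma\hat g^k)$, $\hat g^k=\frac1n\sum_i\hat g_i^k$, $\hat g_i^k=\hat h_i^k+\hat\Delta_i^k$, $\hat h_i^{k+1}=\hat h_i^k+\nu\hat\Delta_i^k$, $\hat\Delta_i^k=\mathrm{clip}(F_{\xi^k_{2,i}}(\tilde x^k)-\hat h_i^k,\lambda_k)$, with all samples drawn independently. *)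

theory Defs
  imports "HOL-Probability.Probability"
begin

definition clip :: "'a::real_normed_vector \<Rightarrow> real \<Rightarrow> 'a" where
  "clip y lam = (if y = 0 then 0 else min 1 (lam / norm y) *\<^sub>R y)"

definition proper_fun :: "('a \<Rightarrow> ereal) \<Rightarrow> bool" where
  "proper_fun \<Psi> \<longleftrightarrow> (\<forall>x. \<Psi> x \<noteq> -\<infinity>) \<and> (\<exists>x. \<Psi> x \<noteq> \<infinity>)"

text \<open>Closed = lower semicontinuous = all sublevel sets closed.\<close>
definition closed_fun :: "('a::topological_space \<Rightarrow> ereal) \<Rightarrow> bool" where
  "closed_fun \<Psi> \<longleftrightarrow> (\<forall>c. closed {x. \<Psi> x \<le> c})"

definition convex_fun :: "('a::real_vector \<Rightarrow> ereal) \<Rightarrow> bool" where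
  "convex_fun \<Psi> \<longleftrightarrow> (\<forall>x y (t::real). 0 \<le> t \<and> t \<le> 1 \<longrightarrow>
      \<Psi> ((1 - t) *\<^sub>R x + t *\<^sub>R y) \<le> ereal (1 - t) * \<Psi> x + ereal t * \<Psi> y)"

definition prox :: "real \<Rightarrow> ('a::real_normed_vector \<Rightarrow> ereal) \<Rightarrow> 'a \<Rightarrow> 'a" where
  "prox \<gamma> \<Psi> y = (THE x. \<forall>z. \<Psi> x + ereal (norm (x - y)^2 / (2 * \<gamma>))
                              \<le> \<Psi> z + ereal (norm (z - y)^2 / (2 * \<gamma>)))"

definition avgF :: "nat \<Rightarrow> (nat \<Rightarrow> 'a \<Rightarrow> 'a::real_vector) \<Rightarrow> 'a \<Rightarrow> 'a" where
  "avgF n Fi x = (1 / real n) *\<^sub>R (\<Sum>i<n. Fi i x)"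

text \<open>Trajectory of DProx-clipped-SEG-shift for given sample realisations
  xi1 k i, xi2 k i, stochastic oracle Fs i xi x, stepsize gamma, shift parameter nu,
  clipping levels lam k, arbitrary initial point x 0 and arbitrary initial shifts
  ht 0 i, hh 0 i.  Here gt k, gh k are the aggregated estimators tilde g^k, hat g^k.\<close>
definition dprox_clipped_seg_shift ::
  "nat \<Rightarrow> ('a::euclidean_space \<Rightarrow> ereal) \<Rightarrow> real \<Rightarrow> real \<Rightarrow> (nat \<Rightarrow> real)
   \<Rightarrow> (nat \<Rightarrow> 's \<Rightarrow> 'a \<Rightarrow> 'a) \<Rightarrow> (nat \<Rightarrow> nat \<Rightarrow> 's) \<Rightarrow> (nat \<Rightarrow> nat \<Rightarrow> 's)
   \<Rightarrow> (nat \<Rightarrow> 'a) \<Rightarrow> (nat \<Rightarrow> 'a) \<Rightarrow> (nat \<Rightarrow> nat \<Rightarrow> 'a) \<Rightarrow> (nat \<Rightarrow> nat \<Rightarrow> 'a)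
   \<Rightarrow> (nat \<Rightarrow> 'a) \<Rightarrow> (nat \<Rightarrow> 'a) \<Rightarrow> bool" where
  "dprox_clipped_seg_shift n \<Psi> \<gamma> \<nu> lam Fs xi1 xi2 x xt ht hh gt gh \<longleftrightarrow>
     (\<forall>k. gt k = (1 / real n) *\<^sub>R (\<Sum>i<n. ht k i + clip (Fs i (xi1 k i) (x k) - ht k i) (lam k))
        \<and> xt k = prox \<gamma> \<Psi> (x k - \<gamma> *\<^sub>R gt k)
        \<and> (\<forall>i<n. ht (Suc k) i = ht k i + \<nu> *\<^sub>R clip (Fs i (xi1 k i) (x k) - ht k i) (lam k))
        \<and> gh k = (1 / real n) *\<^sub>R (\<Sum>i<n. hh k i + clip (Fs i (xi2 k i) (xt k) - hh k i) (lam k))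
        \<and> x (Suc k) = prox \<gamma> \<Psi> (x k - \<gamma> *\<^sub>R gh k)
        \<and> (\<forall>i<n. hh (Suc k) i = hh k i + \<nu> *\<^sub>R clip (Fs i (xi2 k i) (xt k) - hh k i) (lam k)))"

end

(*
  Each prox step minimises a 1/gamma-strongly convex function, so it obeys the three-point
  inequality  Psi p + |p - y|^2/(2 gamma) + |z - p|^2/(2 gamma) <= Psi z + |z - y|^2/(2 gamma).
  Applied to the extrapolation step (tested at x^{k+1}) and to the update step (tested at u),
  and combined with monotonicity at u, the Lipschitz bound between x^k and xt^k,
  Cauchy-Schwarz and Young's inequality (absorbable because 12 gamma^2 L^2 <= 1), it gives a
  per-iteration bound in which |x^k - u|^2 telescopes; averaging over k and Jensen's
  inequality for Psi finish the proof. The estimate is pathwise: the sampling model, the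
  clipping, the shifts, x^* and the size of V only enter through the ball on which the
  iterates are assumed to stay. Since prox is a definite description, using it requires the
  existence and uniqueness of the minimiser of Psi plus a quadratic; coercivity comes from a
  cone minorant of Psi.
*)

theory Submission
  imports Defs
begin

lemma norm_convex_combination_diff_power2:
  fixes a b y :: "'a::real_inner"
  shows "norm ((1 - t) *\<^sub>R a + t *\<^sub>R b - y)^2
    = (1 - t) * norm (a - y)^2 + t * norm (b - y)^2 - t * (1 - t) * norm (a - b)^2"
proof -
  have "(1 - t) *\<^sub>R a + t *\<^sub>R b - y = (1 - t) *\<^sub>R (a - y) + t *\<^sub>R (b - y)"
    by (simp add: algebra_simps)
  moreover have "a - b = (a - y) - (b - y)" by simp
  ultimately show ?thesis
    unfolding power2_norm_eq_inner
    by (simp add: inner_add_left inner_add_right inner_diff_left inner_diff_right inner_commute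
        algebra_simps power2_eq_square)
qed

lemma norm_add_power2_diff:
  fixes a b c :: "'a::real_inner"
  shows "norm (a + c)^2 - norm (b + c)^2 = norm a^2 - norm b^2 + 2 * inner c (a - b)"
  unfolding power2_norm_eq_inner
  by (simp add: inner_add_left inner_add_right inner_diff_left inner_diff_right inner_commute
      algebra_simps)

lemma proper_fun_not_MInf: "proper_fun \<Psi> \<Longrightarrow> \<Psi> x \<noteq> -\<infinity>"
  unfolding proper_fun_def by blast

lemma proper_fun_finiteE:
  assumes "proper_fun \<Psi>" "\<Psi> x \<noteq> \<infinity>"
  obtains r where "\<Psi> x = ereal r"
  using assms unfolding proper_fun_def by (cases "\<Psi> x") auto

lemma convex_fun_imp_convex_on:
  fixes \<Psi> :: "'a::real_vector \<Rightarrow> ereal"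
  assumes cv: "convex_fun \<Psi>" and pr: "proper_fun \<Psi>"
  shows "convex_on {x. \<Psi> x \<noteq> \<infinity>} (\<lambda>x. real_of_ereal (\<Psi> x))"
proof -
  have *: "\<Psi> ((1 - t) *\<^sub>R a + t *\<^sub>R b) \<noteq> \<infinity> \<and>
      real_of_ereal (\<Psi> ((1 - t) *\<^sub>R a + t *\<^sub>R b))
        \<le> (1 - t) * real_of_ereal (\<Psi> a) + t * real_of_ereal (\<Psi> b)"
    if fin: "\<Psi> a \<noteq> \<infinity>" "\<Psi> b \<noteq> \<infinity>" and t: "0 \<le> t" "t \<le> 1" for a b t
  proof -
    obtain ra rb where ab: "\<Psi> a = ereal ra" "\<Psi> b = ereal rb"
      using proper_fun_finiteE[OF pr] fin by metis
    have "\<Psi> ((1 - t) *\<^sub>R a + t *\<^sub>R b) \<le> ereal (1 - t) * \<Psi> a + ereal t * \<Psi> b"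
      using cv t unfolding convex_fun_def by blast
    then have "\<Psi> ((1 - t) *\<^sub>R a + t *\<^sub>R b) \<le> ereal ((1 - t) * ra + t * rb)"
      by (simp add: ab)
    then show ?thesis
      using proper_fun_not_MInf[OF pr] by (cases "\<Psi> ((1 - t) *\<^sub>R a + t *\<^sub>R b)") (auto simp: ab)
  qed
  have dom: "convex {x. \<Psi> x \<noteq> \<infinity>}"
  proof (rule convexI)
    fix a b and u v :: real
    assume "a \<in> {x. \<Psi> x \<noteq> \<infinity>}" "b \<in> {x. \<Psi> x \<noteq> \<infinity>}" "0 \<le> u" "0 \<le> v" "u + v = 1"
    moreover have "u = 1 - v" using \<open>u + v = 1\<close> by simp
    ultimately show "u *\<^sub>R a + v *\<^sub>R b \<in> {x. \<Psi> x \<noteq> \<infinity>}" using *[of a b v] by simp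
  qed
  show "convex_on {x. \<Psi> x \<noteq> \<infinity>} (\<lambda>x. real_of_ereal (\<Psi> x))"
  proof (rule convex_onI[OF _ dom])
    fix t :: real and a b
    assume "0 < t" "t < 1" "a \<in> {x. \<Psi> x \<noteq> \<infinity>}" "b \<in> {x. \<Psi> x \<noteq> \<infinity>}"
    then show "real_of_ereal (\<Psi> ((1 - t) *\<^sub>R a + t *\<^sub>R b))
        \<le> (1 - t) * real_of_ereal (\<Psi> a) + t * real_of_ereal (\<Psi> b)"
      using *[of a b t] by simp
  qed
qed

lemma closed_sublevels_attains_min:
  fixes f :: "'a::heine_borel \<Rightarrow> 'b::{complete_linorder, dense_linorder}"
  assumes closed: "\<And>c. closed {x. f x \<le> c}" and bounded: "bounded {x. f x \<le> f x0}"
  shows "\<exists>p. \<forall>z. f p \<le> f z"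
proof -
  define \<alpha> where "\<alpha> = (INF x. f x)"
  have inf_le: "\<alpha> \<le> f z" for z unfolding \<alpha>_def by (rule INF_lower) simp
  show ?thesis
  proof (cases "\<alpha> < f x0")
    case False
    then show ?thesis using inf_le by (metis antisym not_less)
  next
    case True
    define levels where "levels = (\<lambda>c. {x. f x \<le> c}) ` {c. \<alpha> < c \<and> c \<le> f x0}"
    have "\<Inter>levels \<noteq> {}"
    proof (rule closed_fip_Heine_Borel)
      show "{x. f x \<le> f x0} \<in> levels" using True levels_def by auto
      show "bounded {x. f x \<le> f x0}" by (rule bounded)
      show "\<And>T. T \<in> levels \<Longrightarrow> closed T" using closed levels_def by auto
    next
      fix L assume "finite L" "L \<subseteq> levels"
      then obtain C where C: "C \<subseteq> {c. \<alpha> < c \<and> c \<le> f x0}" "finite C" "L = (\<lambda>c. {x. f x \<le> c}) ` C"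
        unfolding levels_def by (meson finite_subset_image)
      show "\<Inter>L \<noteq> {}"
      proof (cases "C = {}")
        case False
        then have "\<alpha> < Min C" using C by auto
        then obtain x where "f x < Min C" unfolding \<alpha>_def by (auto simp: INF_less_iff)
        then have "\<forall>c\<in>C. f x \<le> c" using C False by (meson Min_le less_imp_le order_trans)
        then show ?thesis using C by auto
      qed (use C in auto)
    qed
    then obtain p where p: "p \<in> \<Inter>levels" by blast
    have "f p \<le> \<alpha>"
    proof (rule dense_ge)
      fix c assume "\<alpha> < c"
      then have "min c (f x0) \<in> {c. \<alpha> < c \<and> c \<le> f x0}" using True by simp
      then have "{x. f x \<le> min c (f x0)} \<in> levels" unfolding levels_def by (rule imageI)
      then show "f p \<le> c" using p by auto
    qed
    then show ?thesis using inf_le order_trans by blast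
  qed
qed

lemma closed_fun_add_continuous:
  fixes \<Psi> :: "'a::first_countable_topology \<Rightarrow> ereal" and g :: "'a \<Rightarrow> real"
  assumes cf: "closed_fun \<Psi>" and g: "continuous_on UNIV g"
  shows "closed_fun (\<lambda>x. \<Psi> x + ereal (g x))"
  unfolding closed_fun_def
proof
  fix c
  have sub_iff: "\<Psi> x + ereal (g x) \<le> ereal r \<longleftrightarrow> \<Psi> x \<le> ereal (r - g x)" for x r
    by (cases "\<Psi> x") auto
  show "closed {x. \<Psi> x + ereal (g x) \<le> c}"
  proof (cases c)
    case PInf
    then show ?thesis by simp
  next
    case MInf
    then have "{x. \<Psi> x + ereal (g x) \<le> c} = {x. \<Psi> x \<le> -\<infinity>}" by auto
    moreover have "closed {x. \<Psi> x \<le> -\<infinity>}" using cf unfolding closed_fun_def by blast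
    ultimately show ?thesis by simp
  next
    case (real r)
    show ?thesis unfolding closed_sequential_limits
    proof (intro allI impI)
      fix X l assume X: "(\<forall>n. X n \<in> {x. \<Psi> x + ereal (g x) \<le> c}) \<and> X \<longlonglongrightarrow> l"
      have gX: "(\<lambda>n. g (X n)) \<longlonglongrightarrow> g l"
        using continuous_on_tendsto_compose[OF g, of X l sequentially] X by simp
      have "\<Psi> l \<le> ereal (r - g l) + ereal e" if "e > 0" for e
      proof -
        have "l \<in> {x. \<Psi> x \<le> ereal (r - g l + e)}"
        proof (rule Lim_in_closed_set[where f = X and F = sequentially])
          show "closed {x. \<Psi> x \<le> ereal (r - g l + e)}" using cf unfolding closed_fun_def by blast
          show "\<forall>\<^sub>F n in sequentially. X n \<in> {x. \<Psi> x \<le> ereal (r - g l + e)}"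
            using tendstoD[OF gX \<open>e > 0\<close>]
          proof (rule eventually_mono)
            fix n assume "dist (g (X n)) (g l) < e"
            then have "ereal (r - g (X n)) \<le> ereal (r - g l + e)" by (simp add: dist_real_def abs_less_iff)
            moreover have "\<Psi> (X n) \<le> ereal (r - g (X n))" using X real sub_iff by auto
            ultimately have "\<Psi> (X n) \<le> ereal (r - g l + e)" by (rule order_trans[rotated])
            then show "X n \<in> {x. \<Psi> x \<le> ereal (r - g l + e)}" by simp
          qed
        qed (use X in auto)
        then show ?thesis by simp
      qed
      then have "\<Psi> l \<le> ereal (r - g l)" by (rule ereal_le_epsilon2[rule_format])
      then show "l \<in> {x. \<Psi> x + ereal (g x) \<le> c}" using real sub_iff by simp
    qed
  qed
qed

lemma power2_le_affine_imp_le: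
  fixes r a b :: real
  assumes r: "r^2 \<le> a + b * r" and b: "0 \<le> b"
  shows "r \<le> 1 + \<bar>a\<bar> + b"
proof (cases "r \<le> 1")
  case False
  then have "a \<le> \<bar>a\<bar> * r"
    by (metis abs_ge_self abs_ge_zero less_eq_real_def mult_le_cancel_left1 not_le order_trans)
  then have "r * r \<le> (\<bar>a\<bar> + b) * r" using r by (simp add: power2_eq_square algebra_simps)
  then show ?thesis using False by simp
qed (use b abs_ge_zero[of a] in linarith)

lemma closed_fun_attains_min_on_cball:
  fixes \<Psi> :: "'a::euclidean_space \<Rightarrow> ereal"
  assumes cf: "closed_fun \<Psi>" and x0: "\<Psi> x0 \<noteq> \<infinity>" and r: "0 \<le> r"
  obtains p where "p \<in> cball x0 r" and "\<And>z. z \<in> cball x0 r \<Longrightarrow> \<Psi> p \<le> \<Psi> z"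
proof -
  define f where "f x = (if x \<in> cball x0 r then \<Psi> x else \<infinity>)" for x
  have f_ball: "f x = \<Psi> x" if "x \<in> cball x0 r" for x
    unfolding f_def using that by (rule if_P)
  have f_out: "f x = \<infinity>" if "x \<notin> cball x0 r" for x
    unfolding f_def using that by (rule if_not_P)
  have sublevel: "{x. f x \<le> f x0} \<subseteq> cball x0 r"
  proof
    fix x assume "x \<in> {x. f x \<le> f x0}"
    then have "f x \<noteq> \<infinity>" using f_ball[of x0] x0 r by auto
    then show "x \<in> cball x0 r" using f_out by blast
  qed
  have "closed {x. f x \<le> c}" for c
  proof -
    have "{x. f x \<le> c} = (if c = \<infinity> then UNIV else cball x0 r \<inter> {x. \<Psi> x \<le> c})"
      unfolding f_def by auto
    then show ?thesis using cf unfolding closed_fun_def by auto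
  qed
  then obtain p where p: "\<And>z. f p \<le> f z"
    using closed_sublevels_attains_min[of f x0] bounded_subset[OF bounded_cball sublevel] by blast
  have "p \<in> cball x0 r" using sublevel p[of x0] by blast
  moreover have "\<Psi> p \<le> \<Psi> z" if "z \<in> cball x0 r" for z
    using p[of z] f_ball[OF that] f_ball[OF \<open>p \<in> cball x0 r\<close>] by simp
  ultimately show ?thesis by (rule that)
qed

lemma convex_on_lower_bound_from_cball:
  fixes \<psi> :: "'a::real_normed_vector \<Rightarrow> real"
  assumes convex: "convex_on S \<psi>" and x0: "x0 \<in> S" and x: "x \<in> S"
    and ball: "\<And>z. z \<in> S \<Longrightarrow> z \<in> cball x0 1 \<Longrightarrow> m \<le> \<psi> z"
  shows "m - (\<psi> x0 - m) * norm (x - x0) \<le> \<psi> x"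
proof -
  have m: "m \<le> \<psi> x0" using ball[OF x0] by simp
  show ?thesis
  proof (cases "norm (x - x0) \<le> 1")
    case True
    then have "m \<le> \<psi> x" using ball x by (simp add: dist_norm norm_minus_commute)
    moreover have "0 \<le> (\<psi> x0 - m) * norm (x - x0)" using m by simp
    ultimately show ?thesis by linarith
  next
    case False
    define d where "d = norm (x - x0)"
    define t where "t = 1 / d"
    have t: "0 \<le> t" "t \<le> 1" "t * d = 1"
      using False unfolding t_def d_def by (auto simp: divide_le_eq_1)
    define z where "z = (1 - t) *\<^sub>R x0 + t *\<^sub>R x"
    have "z - x0 = t *\<^sub>R (x - x0)" unfolding z_def by (simp add: algebra_simps)
    then have "norm (z - x0) = 1" using t unfolding d_def by simp
    then have "z \<in> cball x0 1" by (simp add: dist_norm norm_minus_commute)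
    moreover have "z \<in> S"
      unfolding z_def using convexD_alt[OF convex_on_imp_convex[OF convex] x0 x] t by simp
    ultimately have "m \<le> \<psi> z" by (intro ball)
    also have "\<dots> \<le> (1 - t) * \<psi> x0 + t * \<psi> x"
      unfolding z_def using convex_onD[OF convex, of t x0 x] x0 x t by simp
    finally have "m * d \<le> ((1 - t) * \<psi> x0 + t * \<psi> x) * d"
      by (rule mult_right_mono) (simp add: d_def)
    also have "\<dots> = d * \<psi> x0 - (t * d) * \<psi> x0 + (t * d) * \<psi> x" by (simp add: algebra_simps)
    also have "\<dots> = d * \<psi> x0 - \<psi> x0 + \<psi> x" using t(3) by simp
    finally have "\<psi> x0 - (\<psi> x0 - m) * d \<le> \<psi> x" by (simp add: algebra_simps)
    then show ?thesis using m unfolding d_def by (smt (verit) mult_right_mono norm_ge_zero)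
  qed
qed

lemma proper_closed_convex_fun_cone_minorant:
  fixes \<Psi> :: "'a::euclidean_space \<Rightarrow> ereal"
  assumes pr: "proper_fun \<Psi>" and cf: "closed_fun \<Psi>" and cv: "convex_fun \<Psi>"
    and x0: "\<Psi> x0 \<noteq> \<infinity>"
  shows "\<exists>b C. 0 \<le> C \<and> (\<forall>x. ereal (b - C * norm (x - x0)) \<le> \<Psi> x)"
proof -
  let ?\<psi> = "\<lambda>x. real_of_ereal (\<Psi> x)"
  obtain p where p: "p \<in> cball x0 1" and min: "\<And>z. z \<in> cball x0 1 \<Longrightarrow> \<Psi> p \<le> \<Psi> z"
    using closed_fun_attains_min_on_cball[OF cf x0, of 1] by auto
  have "\<Psi> p \<noteq> \<infinity>" using min[of x0] x0 by auto
  then obtain rp where rp: "\<Psi> p = ereal rp" using proper_fun_finiteE[OF pr] by blast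
  have ball: "rp \<le> ?\<psi> z" if z: "z \<in> {x. \<Psi> x \<noteq> \<infinity>}" "z \<in> cball x0 1" for z
  proof -
    obtain rz where "\<Psi> z = ereal rz" using proper_fun_finiteE[OF pr] z(1) by blast
    then show ?thesis using min[OF z(2)] rp by simp
  qed
  have bound: "ereal (rp - (?\<psi> x0 - rp) * norm (x - x0)) \<le> \<Psi> x" for x
  proof (cases "\<Psi> x = \<infinity>")
    case False
    then obtain r where "\<Psi> x = ereal r" using proper_fun_finiteE[OF pr] by blast
    moreover have "rp - (?\<psi> x0 - rp) * norm (x - x0) \<le> ?\<psi> x"
      using convex_on_lower_bound_from_cball[OF convex_fun_imp_convex_on[OF cv pr] _ _ ball] x0 False
      by simp
    ultimately show ?thesis by simp
  qed simp
  moreover have "0 \<le> ?\<psi> x0 - rp" using ball[of x0] x0 by simp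
  ultimately show ?thesis by blast
qed

lemma prox_objective_attains_min:
  fixes \<Psi> :: "'a::euclidean_space \<Rightarrow> ereal"
  assumes pr: "proper_fun \<Psi>" and cf: "closed_fun \<Psi>" and cv: "convex_fun \<Psi>" and \<gamma>: "0 < \<gamma>"
  shows "\<exists>p. \<forall>z. \<Psi> p + ereal (norm (p - y)^2 / (2 * \<gamma>))
                 \<le> \<Psi> z + ereal (norm (z - y)^2 / (2 * \<gamma>))"
proof -
  define q where "q x = norm (x - y)^2 / (2 * \<gamma>)" for x
  obtain x0 where x0: "\<Psi> x0 \<noteq> \<infinity>" using pr unfolding proper_fun_def by blast
  obtain b C where C: "0 \<le> C" and minorant: "\<And>x. ereal (b - C * norm (x - x0)) \<le> \<Psi> x"
    using proper_closed_convex_fun_cone_minorant[OF pr cf cv x0] by blast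
  define A where "A = 2 * \<gamma> * (real_of_ereal (\<Psi> x0) + q x0 - b + C * norm (y - x0))"
  define R where "R = 1 + \<bar>A\<bar> + 2 * \<gamma> * C"
  have radius: "norm (x - y) \<le> R" if "\<Psi> x + ereal (q x) \<le> \<Psi> x0 + ereal (q x0)" for x
    unfolding R_def
  proof (rule power2_le_affine_imp_le)
    have "ereal (b - C * norm (x - x0) + q x) \<le> \<Psi> x + ereal (q x)"
      using add_right_mono[OF minorant[of x], of "ereal (q x)"] by simp
    also have "\<dots> \<le> ereal (real_of_ereal (\<Psi> x0) + q x0)"
      using that proper_fun_finiteE[OF pr x0] by (metis plus_ereal.simps(1) real_of_ereal.simps(1))
    finally have "b - C * norm (x - x0) + q x \<le> real_of_ereal (\<Psi> x0) + q x0" by simp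
    moreover have "C * norm (x - x0) \<le> C * norm (x - y) + C * norm (y - x0)"
      using mult_left_mono[OF norm_triangle_ineq[of "x - y" "y - x0"] C] by (simp add: distrib_left)
    ultimately have "q x \<le> real_of_ereal (\<Psi> x0) + q x0 - b + C * norm (y - x0) + C * norm (x - y)"
      by linarith
    then have "2 * \<gamma> * q x
        \<le> 2 * \<gamma> * (real_of_ereal (\<Psi> x0) + q x0 - b + C * norm (y - x0) + C * norm (x - y))"
      using \<gamma> by simp
    moreover have "2 * \<gamma> * q x = norm (x - y)^2" using \<gamma> unfolding q_def by simp
    ultimately show "norm (x - y)^2 \<le> A + 2 * \<gamma> * C * norm (x - y)"
      unfolding A_def by (simp add: algebra_simps)
  qed (use \<gamma> C in simp)
  have "{x. \<Psi> x + ereal (q x) \<le> \<Psi> x0 + ereal (q x0)} \<subseteq> cball y R"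
  proof
    fix x assume "x \<in> {x. \<Psi> x + ereal (q x) \<le> \<Psi> x0 + ereal (q x0)}"
    then have "norm (x - y) \<le> R" by (intro radius) simp
    then show "x \<in> cball y R" by (simp add: dist_norm norm_minus_commute)
  qed
  then have bounded: "bounded {x. \<Psi> x + ereal (q x) \<le> \<Psi> x0 + ereal (q x0)}"
    by (rule bounded_subset[OF bounded_cball])
  have "continuous_on UNIV q" unfolding q_def using \<gamma> by (intro continuous_intros) auto
  then have "closed_fun (\<lambda>x. \<Psi> x + ereal (q x))" by (rule closed_fun_add_continuous[OF cf])
  then have "\<exists>p. \<forall>z. \<Psi> p + ereal (q p) \<le> \<Psi> z + ereal (q z)"
    using closed_sublevels_attains_min[of "\<lambda>x. \<Psi> x + ereal (q x)" x0] bounded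
    unfolding closed_fun_def by blast
  then show ?thesis unfolding q_def .
qed

lemma prox_objective_three_point:
  fixes \<Psi> :: "'a::real_inner \<Rightarrow> ereal"
  assumes cv: "convex_fun \<Psi>" and pr: "proper_fun \<Psi>" and \<gamma>: "0 < \<gamma>"
    and min: "\<And>z. \<Psi> p + ereal (norm (p - y)^2 / (2 * \<gamma>))
                 \<le> \<Psi> z + ereal (norm (z - y)^2 / (2 * \<gamma>))"
    and p: "\<Psi> p \<noteq> \<infinity>" and z: "\<Psi> z \<noteq> \<infinity>"
  shows "real_of_ereal (\<Psi> p) + norm (p - y)^2 / (2 * \<gamma>) + norm (z - p)^2 / (2 * \<gamma>)
         \<le> real_of_ereal (\<Psi> z) + norm (z - y)^2 / (2 * \<gamma>)"
proof -
  let ?\<psi> = "\<lambda>x. real_of_ereal (\<Psi> x)"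
  define q where "q x = norm (x - y)^2 / (2 * \<gamma>)" for x
  define N where "N = norm (z - p)^2 / (2 * \<gamma>)"
  define A where "A = ?\<psi> p + q p"
  define B where "B = ?\<psi> z + q z"
  have N: "0 \<le> N" unfolding N_def using \<gamma> by simp
  have segment: "A + N \<le> B + t * N" if t: "0 < t" "t \<le> 1" for t
  proof -
    define w where "w = (1 - t) *\<^sub>R p + t *\<^sub>R z"
    have w: "\<Psi> w \<noteq> \<infinity>"
      using convexD_alt[OF convex_on_imp_convex[OF convex_fun_imp_convex_on[OF cv pr]], of p z t] p z t
      unfolding w_def by simp
    have \<psi>w: "?\<psi> w \<le> (1 - t) * ?\<psi> p + t * ?\<psi> z"
      using convex_onD[OF convex_fun_imp_convex_on[OF cv pr], of t p z] p z t unfolding w_def by simp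
    have qw: "q w = (1 - t) * q p + t * q z - t * (1 - t) * N"
      using norm_convex_combination_diff_power2[of t p z y] \<gamma> unfolding q_def N_def w_def
      by (simp add: norm_minus_commute diff_divide_distrib add_divide_distrib)
    obtain rp rw where "\<Psi> p = ereal rp" "\<Psi> w = ereal rw"
      using proper_fun_finiteE[OF pr] p w by metis
    then have "A \<le> ?\<psi> w + q w" using min[of w] unfolding A_def q_def by simp
    then have "A \<le> (1 - t) * A + t * B - t * (1 - t) * N"
      using \<psi>w qw unfolding A_def B_def by (simp add: algebra_simps)
    then have "t * A \<le> t * (B - (1 - t) * N)" by (simp add: algebra_simps)
    then have "A \<le> B - (1 - t) * N" using t by simp
    then show ?thesis by (simp add: algebra_simps)
  qed
  have "A + N \<le> B"
  proof (rule field_le_epsilon)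
    fix e :: real assume e: "0 < e"
    define t where "t = min 1 (e / (N + 1))"
    have t: "0 < t" "t \<le> 1" using e N unfolding t_def by auto
    have "t * N \<le> e / (N + 1) * N" using N unfolding t_def by (intro mult_right_mono) auto
    also have "\<dots> \<le> e" using N e by (simp add: field_simps)
    finally show "A + N \<le> B + e" using segment[OF t] by simp
  qed
  then show ?thesis unfolding A_def B_def N_def q_def by simp
qed

lemma prox_three_point:
  fixes \<Psi> :: "'a::euclidean_space \<Rightarrow> ereal"
  assumes pr: "proper_fun \<Psi>" and cf: "closed_fun \<Psi>" and cv: "convex_fun \<Psi>" and \<gamma>: "0 < \<gamma>"
  shows prox_finite: "\<Psi> (prox \<gamma> \<Psi> y) \<noteq> \<infinity>"
    and "\<Psi> z \<noteq> \<infinity> \<Longrightarrow> real_of_ereal (\<Psi> (prox \<gamma> \<Psi> y)) + norm (prox \<gamma> \<Psi> y - y)^2 / (2 * \<gamma>)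
           + norm (z - prox \<gamma> \<Psi> y)^2 / (2 * \<gamma>) \<le> real_of_ereal (\<Psi> z) + norm (z - y)^2 / (2 * \<gamma>)"
proof -
  define \<phi> where "\<phi> x = \<Psi> x + ereal (norm (x - y)^2 / (2 * \<gamma>))" for x
  obtain x0 where x0: "\<Psi> x0 \<noteq> \<infinity>" using pr unfolding proper_fun_def by blast
  have finite_min: "\<Psi> p \<noteq> \<infinity>" if "\<And>z. \<phi> p \<le> \<phi> z" for p
    using that[of x0] x0 unfolding \<phi>_def by auto
  obtain p where min: "\<And>z. \<phi> p \<le> \<phi> z"
    using prox_objective_attains_min[OF pr cf cv \<gamma>] unfolding \<phi>_def by blast
  note three_point = prox_objective_three_point[OF cv pr \<gamma> min[unfolded \<phi>_def] finite_min[OF min]]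
  have prox: "prox \<gamma> \<Psi> y = p"
    unfolding prox_def
  proof (rule the_equality)
    fix p'
    assume min': "\<forall>z. \<Psi> p' + ereal (norm (p' - y)^2 / (2 * \<gamma>))
                       \<le> \<Psi> z + ereal (norm (z - y)^2 / (2 * \<gamma>))"
    then have p': "\<Psi> p' \<noteq> \<infinity>" using finite_min unfolding \<phi>_def by blast
    obtain r r' where "\<Psi> p = ereal r" "\<Psi> p' = ereal r'"
      using proper_fun_finiteE[OF pr] finite_min[OF min] p' by metis
    then have "real_of_ereal (\<Psi> p') + norm (p' - y)^2 / (2 * \<gamma>)
        \<le> real_of_ereal (\<Psi> p) + norm (p - y)^2 / (2 * \<gamma>)"
      using min'[rule_format, of p] by simp
    then have "norm (p' - p)^2 / (2 * \<gamma>) \<le> 0" using three_point[OF p'] by simp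
    then show "p' = p" using \<gamma> by (simp add: divide_le_0_iff)
  qed (use min in \<open>simp add: \<phi>_def\<close>)
  show "\<Psi> (prox \<gamma> \<Psi> y) \<noteq> \<infinity>" using finite_min[OF min] prox by simp
  show "real_of_ereal (\<Psi> (prox \<gamma> \<Psi> y)) + norm (prox \<gamma> \<Psi> y - y)^2 / (2 * \<gamma>)
      + norm (z - prox \<gamma> \<Psi> y)^2 / (2 * \<gamma>) \<le> real_of_ereal (\<Psi> z) + norm (z - y)^2 / (2 * \<gamma>)"
    if "\<Psi> z \<noteq> \<infinity>"
    using three_point[OF that] prox by simp
qed

lemma extragradient_young_bound:
  fixes \<gamma> L A B T W :: real
  assumes \<gamma>: "0 < \<gamma>" and L: "12 * \<gamma>^2 * L^2 \<le> 1"
  shows "L * A * B + T * A + W * B + T * B \<le> (A^2 + B^2) / (2 * \<gamma>) + \<gamma> * (3 * W^2 + 4 * T^2)"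
proof -
  have y1: "\<gamma> * T * A \<le> 2 * \<gamma>^2 * T^2 + A^2 / 8"
    using sum_squares_ge_zero[of "\<gamma> * T - A / 4" 0] by (simp add: power2_eq_square algebra_simps)
  have y2: "\<gamma> * T * B \<le> 2 * \<gamma>^2 * T^2 + B^2 / 8"
    using sum_squares_ge_zero[of "\<gamma> * T - B / 4" 0] by (simp add: power2_eq_square algebra_simps)
  have y3: "\<gamma> * W * B \<le> 3 * \<gamma>^2 * W^2 + B^2 / 12"
    using sum_squares_ge_zero[of "\<gamma> * W - B / 6" 0] by (simp add: power2_eq_square algebra_simps)
  have y4: "\<gamma> * L * A * B \<le> 2 * \<gamma>^2 * L^2 * A^2 + B^2 / 8"
    using sum_squares_ge_zero[of "\<gamma> * L * A - B / 4" 0] by (simp add: power2_eq_square algebra_simps)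
  have y5: "2 * \<gamma>^2 * L^2 * A^2 \<le> A^2 / 6"
    using mult_right_mono[OF L, of "A^2"] by (simp add: algebra_simps)
  have lhs: "\<gamma> * (L * A * B + T * A + W * B + T * B)
      = \<gamma> * L * A * B + \<gamma> * T * A + \<gamma> * W * B + \<gamma> * T * B"
    by (simp add: algebra_simps)
  have rhs: "\<gamma> * ((A^2 + B^2) / (2 * \<gamma>) + \<gamma> * (3 * W^2 + 4 * T^2))
      = A^2 / 2 + B^2 / 2 + 3 * \<gamma>^2 * W^2 + 4 * \<gamma>^2 * T^2"
    using \<gamma> by (simp add: field_simps power2_eq_square)
  have "0 \<le> A^2" "0 \<le> B^2" by simp_all
  then have "\<gamma> * (L * A * B + T * A + W * B + T * B)
      \<le> \<gamma> * ((A^2 + B^2) / (2 * \<gamma>) + \<gamma> * (3 * W^2 + 4 * T^2))"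
    unfolding lhs rhs using y1 y2 y3 y4 y5 by linarith
  then show ?thesis using \<gamma> by simp
qed

text \<open>\<open>A\<close> and \<open>B\<close> are the three-point inequalities of \<open>x' = prox (x - \<gamma> gh)\<close> tested at \<open>u\<close>
  and of \<open>xt = prox (x - \<gamma> gt)\<close> tested at \<open>x'\<close>, with \<open>pxt, pxp, pu\<close> the values of \<open>\<Psi>\<close>.\<close>
lemma extragradient_three_point_bound:
  fixes x xt x' u gt gh Fx Fxt Fu :: "'a::real_inner"
  assumes \<gamma>: "0 < \<gamma>" and L: "12 * \<gamma>^2 * L^2 \<le> 1"
    and A: "pxp + norm (x' - (x - \<gamma> *\<^sub>R gh))^2 / (2 * \<gamma>) + norm (u - x')^2 / (2 * \<gamma>)
              \<le> pu + norm (u - (x - \<gamma> *\<^sub>R gh))^2 / (2 * \<gamma>)"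
    and B: "pxt + norm (xt - (x - \<gamma> *\<^sub>R gt))^2 / (2 * \<gamma>) + norm (x' - xt)^2 / (2 * \<gamma>)
              \<le> pxp + norm (x' - (x - \<gamma> *\<^sub>R gt))^2 / (2 * \<gamma>)"
    and mono: "0 \<le> inner (Fxt - Fu) (xt - u)"
    and lip: "norm (Fxt - Fx) \<le> L * norm (xt - x)"
  shows "inner Fu (xt - u) + pxt - pu \<le> (norm (x - u)^2 - norm (x' - u)^2) / (2 * \<gamma>)
          + \<gamma> * (3 * norm (Fx - gt)^2 + 4 * norm (Fxt - gh)^2) + inner (Fxt - gh) (x - u)"
proof -
  define \<theta> where "\<theta> = Fxt - gh"
  define \<omega> where "\<omega> = Fx - gt"
  define a where "a = xt - x"
  define b where "b = xt - x'"
  have "norm (u - (x - \<gamma> *\<^sub>R gh))^2 - norm (x' - (x - \<gamma> *\<^sub>R gh))^2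
      = norm (x - u)^2 - norm (x' - x)^2 + 2 * \<gamma> * inner gh (u - x')"
    using norm_add_power2_diff[of "u - x" "\<gamma> *\<^sub>R gh" "x' - x"] by (simp add: algebra_simps norm_minus_commute)
  then have A': "norm (u - (x - \<gamma> *\<^sub>R gh))^2 / (2 * \<gamma>) - norm (x' - (x - \<gamma> *\<^sub>R gh))^2 / (2 * \<gamma>)
      = norm (x - u)^2 / (2 * \<gamma>) - norm (x' - x)^2 / (2 * \<gamma>) + inner gh (u - x')"
    using \<gamma> by (simp add: diff_divide_distrib [symmetric] add_divide_distrib field_simps)
  have "norm (x' - (x - \<gamma> *\<^sub>R gt))^2 - norm (xt - (x - \<gamma> *\<^sub>R gt))^2
      = norm (x' - x)^2 - norm a^2 + 2 * \<gamma> * inner gt (x' - xt)"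
    using norm_add_power2_diff[of "x' - x" "\<gamma> *\<^sub>R gt" "xt - x"] unfolding a_def by (simp add: algebra_simps)
  then have B': "norm (x' - (x - \<gamma> *\<^sub>R gt))^2 / (2 * \<gamma>) - norm (xt - (x - \<gamma> *\<^sub>R gt))^2 / (2 * \<gamma>)
      = norm (x' - x)^2 / (2 * \<gamma>) - norm a^2 / (2 * \<gamma>) + inner gt (x' - xt)"
    using \<gamma> by (simp add: diff_divide_distrib [symmetric] add_divide_distrib field_simps)
  have "norm (x' - xt) = norm b" "norm (u - x') = norm (x' - u)"
    unfolding b_def by (simp_all add: norm_minus_commute)
  then have AB: "pxt - pu \<le> (norm (x - u)^2 - norm (x' - u)^2) / (2 * \<gamma>) - (norm a^2 + norm b^2) / (2 * \<gamma>)
      + inner gh (u - x') + inner gt (x' - xt)"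
    using A B A' B' by (simp add: diff_divide_distrib add_divide_distrib)
  have "inner Fu (xt - u) + inner gh (u - x') + inner gt (x' - xt)
     = - inner (Fxt - Fu) (xt - u) + inner (Fxt - Fx) b + inner \<theta> (x - u) + inner \<theta> a - inner \<theta> b + inner \<omega> b"
    unfolding \<theta>_def \<omega>_def a_def b_def
    by (simp add: inner_diff_left inner_diff_right inner_commute algebra_simps)
  moreover have "inner (Fxt - Fx) b \<le> L * norm a * norm b"
    using norm_cauchy_schwarz[of "Fxt - Fx" b] mult_right_mono[OF lip, of "norm b"] unfolding a_def by simp
  moreover have "inner \<theta> a \<le> norm \<theta> * norm a" "inner \<omega> b \<le> norm \<omega> * norm b"
    by (simp_all add: norm_cauchy_schwarz)
  moreover have "- inner \<theta> b \<le> norm \<theta> * norm b"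
    using norm_cauchy_schwarz[of \<theta> "-b"] by simp
  moreover have "L * norm a * norm b + norm \<theta> * norm a + norm \<omega> * norm b + norm \<theta> * norm b
      \<le> (norm a^2 + norm b^2) / (2 * \<gamma>) + \<gamma> * (3 * norm \<omega>^2 + 4 * norm \<theta>^2)"
    by (rule extragradient_young_bound[OF \<gamma> L])
  ultimately show ?thesis using AB mono unfolding \<theta>_def[symmetric] \<omega>_def[symmetric] by linarith
qed

lemma prox_extragradient_step_bound:
  fixes \<Psi> :: "'a::euclidean_space \<Rightarrow> ereal"
  assumes pr: "proper_fun \<Psi>" and cf: "closed_fun \<Psi>" and cv: "convex_fun \<Psi>"
    and \<gamma>: "0 < \<gamma>" and L: "12 * \<gamma>^2 * L^2 \<le> 1"
    and xt: "xt = prox \<gamma> \<Psi> (x - \<gamma> *\<^sub>R gt)" and x': "x' = prox \<gamma> \<Psi> (x - \<gamma> *\<^sub>R gh)"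
    and u: "\<Psi> u \<noteq> \<infinity>"
    and mono: "0 \<le> inner (Fxt - Fu) (xt - u)"
    and lip: "norm (Fxt - Fx) \<le> L * norm (xt - x)"
  shows "inner Fu (xt - u) + real_of_ereal (\<Psi> xt) - real_of_ereal (\<Psi> u)
     \<le> (norm (x - u)^2 - norm (x' - u)^2) / (2 * \<gamma>)
        + \<gamma> * (3 * norm (Fx - gt)^2 + 4 * norm (Fxt - gh)^2) + inner (Fxt - gh) (x - u)"
proof (rule extragradient_three_point_bound[OF \<gamma> L _ _ mono lip, where pxp = "real_of_ereal (\<Psi> x')"])
  note three_point = prox_three_point[OF pr cf cv \<gamma>]
  show "real_of_ereal (\<Psi> x') + norm (x' - (x - \<gamma> *\<^sub>R gh))^2 / (2 * \<gamma>) + norm (u - x')^2 / (2 * \<gamma>)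
      \<le> real_of_ereal (\<Psi> u) + norm (u - (x - \<gamma> *\<^sub>R gh))^2 / (2 * \<gamma>)"
    unfolding x' using u by (rule three_point(2))
  show "real_of_ereal (\<Psi> xt) + norm (xt - (x - \<gamma> *\<^sub>R gt))^2 / (2 * \<gamma>) + norm (x' - xt)^2 / (2 * \<gamma>)
      \<le> real_of_ereal (\<Psi> x') + norm (x' - (x - \<gamma> *\<^sub>R gt))^2 / (2 * \<gamma>)"
    unfolding xt using three_point(1) x' by (intro three_point(2)) simp
qed

lemma avgF_lipschitz:
  fixes Fi :: "nat \<Rightarrow> 'a \<Rightarrow> 'a::real_normed_vector"
  assumes n: "1 \<le> n" and lip: "\<And>i. i < n \<Longrightarrow> norm (Fi i y - Fi i z) \<le> L * norm (y - z)"
  shows "norm (avgF n Fi y - avgF n Fi z) \<le> L * norm (y - z)"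
proof -
  have "norm (avgF n Fi y - avgF n Fi z) = norm (\<Sum>i<n. Fi i y - Fi i z) / real n"
    unfolding avgF_def by (simp add: sum_subtractf scaleR_diff_right [symmetric])
  also have "\<dots> \<le> (\<Sum>i<n. norm (Fi i y - Fi i z)) / real n"
    by (intro divide_right_mono norm_sum) simp
  also have "\<dots> \<le> (\<Sum>i<n. L * norm (y - z)) / real n"
    using lip by (intro divide_right_mono sum_mono) simp_all
  also have "\<dots> = L * norm (y - z)" using n by simp
  finally show ?thesis .
qed

lemma extragradient_stepsize_bound:
  fixes \<gamma> L :: real
  assumes \<gamma>: "0 < \<gamma>" "\<gamma> \<le> 1 / (sqrt 12 * L)"
  shows "12 * \<gamma>^2 * L^2 \<le> 1"
proof -
  have L: "0 < L"
  proof (rule ccontr)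
    assume "\<not> 0 < L"
    then have "1 / (sqrt 12 * L) \<le> 0" by (simp add: divide_le_0_iff mult_nonneg_nonpos)
    then show False using \<gamma> by linarith
  qed
  have "\<gamma> * (sqrt 12 * L) \<le> 1" using \<gamma> L by (simp add: le_divide_eq)
  then have "(\<gamma> * (sqrt 12 * L))^2 \<le> 1^2" using \<gamma> L by (intro power_mono) auto
  then show ?thesis by (simp add: power_mult_distrib)
qed

lemma convex_average_telescoping_bound:
  fixes \<psi> :: "'a::real_inner \<Rightarrow> real" and y :: "nat \<Rightarrow> 'a"
  assumes convex: "convex_on S \<psi>" and y: "\<And>k. k \<le> K \<Longrightarrow> y k \<in> S" and \<gamma>: "0 < \<gamma>"
    and step: "\<And>k. k \<le> K \<Longrightarrow> inner a (y k - u) + \<psi> (y k) - c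
        \<le> (d k - d (Suc k)) / (2 * \<gamma>) + \<gamma> * e k + t k"
  defines "yavg \<equiv> (1 / (real K + 1)) *\<^sub>R (\<Sum>k\<le>K. y k)"
  shows "yavg \<in> S"
    and "inner a (yavg - u) + \<psi> yavg - c
      \<le> (d 0 - d (K + 1)) / (2 * \<gamma> * (real K + 1)) + \<gamma> / (real K + 1) * (\<Sum>k\<le>K. e k)
         + 1 / (real K + 1) * (\<Sum>k\<le>K. t k)"
proof -
  define w where "w = 1 / (real K + 1)"
  have w: "0 < w" "(\<Sum>k\<le>K. w) = 1" unfolding w_def by simp_all
  have yavg: "yavg = (\<Sum>k\<le>K. w *\<^sub>R y k)" unfolding yavg_def w_def by (simp add: scaleR_sum_right)
  show "yavg \<in> S"
    unfolding yavg using convex_sum[OF _ convex_on_imp_convex[OF convex] w(2)] w y by simp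
  have jensen: "\<psi> yavg \<le> (\<Sum>k\<le>K. w * \<psi> (y k))"
    unfolding yavg using convex_on_sum[OF _ _ convex w(2)] w y by simp
  have "(\<Sum>k\<le>K. w *\<^sub>R u) = u"
    using w(2) by (simp flip: scaleR_sum_left)
  then have "yavg - u = (\<Sum>k\<le>K. w *\<^sub>R (y k - u))"
    unfolding yavg by (simp add: scaleR_diff_right sum_subtractf)
  then have lin: "inner a (yavg - u) = (\<Sum>k\<le>K. w * inner a (y k - u))"
    by (simp add: inner_sum_right)
  have "(\<Sum>k\<le>K. w * c) = c" unfolding w_def by (simp add: add.commute)
  then have "(\<Sum>k\<le>K. w * (inner a (y k - u) + \<psi> (y k) - c))
      = (\<Sum>k\<le>K. w * inner a (y k - u)) + (\<Sum>k\<le>K. w * \<psi> (y k)) - c"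
    by (simp only: right_diff_distrib distrib_left sum.distrib sum_subtractf)
  then have "inner a (yavg - u) + \<psi> yavg - c \<le> (\<Sum>k\<le>K. w * (inner a (y k - u) + \<psi> (y k) - c))"
    using jensen lin by linarith
  also have "\<dots> \<le> (\<Sum>k\<le>K. w * ((d k - d (Suc k)) / (2 * \<gamma>) + \<gamma> * e k + t k))"
    using step w by (intro sum_mono mult_left_mono) auto
  also have "\<dots> = w * ((\<Sum>k\<le>K. d k - d (Suc k)) / (2 * \<gamma>) + \<gamma> * (\<Sum>k\<le>K. e k) + (\<Sum>k\<le>K. t k))"
    by (simp only: sum_distrib_left[symmetric] sum.distrib sum_divide_distrib[symmetric])
  also have "(\<Sum>k\<le>K. d k - d (Suc k)) = d 0 - d (K + 1)" by (simp add: sum_telescope)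
  also have "w * ((d 0 - d (K + 1)) / (2 * \<gamma>) + \<gamma> * (\<Sum>k\<le>K. e k) + (\<Sum>k\<le>K. t k))
      = (d 0 - d (K + 1)) / (2 * \<gamma> * (real K + 1)) + \<gamma> / (real K + 1) * (\<Sum>k\<le>K. e k)
         + 1 / (real K + 1) * (\<Sum>k\<le>K. t k)"
  proof -
    have "1 / k * (P / (2 * \<gamma>) + \<gamma> * E + T) = P / (2 * \<gamma> * k) + \<gamma> / k * E + 1 / k * T"
      if "0 < k" for k P E T :: real
      using \<gamma> that by (simp add: field_simps)
    then show ?thesis unfolding w_def by simp
  qed
  finally show "inner a (yavg - u) + \<psi> yavg - c
      \<le> (d 0 - d (K + 1)) / (2 * \<gamma> * (real K + 1)) + \<gamma> / (real K + 1) * (\<Sum>k\<le>K. e k)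
         + 1 / (real K + 1) * (\<Sum>k\<le>K. t k)" .
qed

lemma dprox_clipped_seg_shift_averaged_gap:
  fixes \<Psi> :: "'a::euclidean_space \<Rightarrow> ereal" and Fi :: "nat \<Rightarrow> 'a \<Rightarrow> 'a"
  assumes n: "1 \<le> n" and Psi: "proper_fun \<Psi>" "closed_fun \<Psi>" "convex_fun \<Psi>"
    and \<gamma>: "0 < \<gamma>" "\<gamma> \<le> 1 / (sqrt 12 * L)"
    and Lip: "\<And>i y z. i < n \<Longrightarrow> y \<in> Q \<Longrightarrow> z \<in> Q \<Longrightarrow> norm (Fi i y - Fi i z) \<le> L * norm (y - z)"
    and mono: "\<And>y z. y \<in> Q \<Longrightarrow> z \<in> Q \<Longrightarrow> 0 \<le> inner (avgF n Fi y - avgF n Fi z) (y - z)"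
    and alg: "dprox_clipped_seg_shift n \<Psi> \<gamma> \<nu> lam Fs xi1 xi2 x xt ht hh gt gh"
    and inQ: "\<And>k. k \<le> K \<Longrightarrow> x k \<in> Q \<and> xt k \<in> Q"
    and u: "u \<in> Q"
  defines "xavg \<equiv> (1 / (real K + 1)) *\<^sub>R (\<Sum>k\<le>K. xt k)"
    and "\<theta> \<equiv> \<lambda>k. avgF n Fi (xt k) - gh k"
    and "\<omega> \<equiv> \<lambda>k. avgF n Fi (x k) - gt k"
  shows "ereal (inner (avgF n Fi u) (xavg - u)) + \<Psi> xavg
    \<le> ereal ((norm (x 0 - u)^2 - norm (x (K + 1) - u)^2) / (2 * \<gamma> * (real K + 1))
             + \<gamma> / (real K + 1) * (\<Sum>k\<le>K. 3 * norm (\<omega> k)^2 + 4 * norm (\<theta> k)^2)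
             + 1 / (real K + 1) * (\<Sum>k\<le>K. inner (\<theta> k) (x k - u)))
      + \<Psi> u"
proof (cases "\<Psi> u = \<infinity>")
  case False
  let ?F = "avgF n Fi" and ?\<psi> = "\<lambda>y. real_of_ereal (\<Psi> y)"
  note L = extragradient_stepsize_bound[OF \<gamma>]
  have xt_prox: "xt k = prox \<gamma> \<Psi> (x k - \<gamma> *\<^sub>R gt k)"
    and x_prox: "x (Suc k) = prox \<gamma> \<Psi> (x k - \<gamma> *\<^sub>R gh k)" for k
    using alg unfolding dprox_clipped_seg_shift_def by blast+
  have xt_dom: "xt k \<in> {y. \<Psi> y \<noteq> \<infinity>}" for k
    using prox_finite[OF Psi \<gamma>(1)] xt_prox by simp
  have step: "inner (?F u) (xt k - u) + ?\<psi> (xt k) - ?\<psi> u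
      \<le> (norm (x k - u)^2 - norm (x (Suc k) - u)^2) / (2 * \<gamma>)
         + \<gamma> * (3 * norm (\<omega> k)^2 + 4 * norm (\<theta> k)^2) + inner (\<theta> k) (x k - u)"
    if k: "k \<le> K" for k
    unfolding \<theta>_def \<omega>_def
  proof (rule prox_extragradient_step_bound[OF Psi \<gamma>(1) L xt_prox x_prox False])
    show "0 \<le> inner (?F (xt k) - ?F u) (xt k - u)" using mono inQ[OF k] u by blast
    show "norm (?F (xt k) - ?F (x k)) \<le> L * norm (xt k - x k)"
      using avgF_lipschitz[OF n] Lip inQ[OF k] by blast
  qed
  note avg = convex_average_telescoping_bound[where K = K and y = xt and d = "\<lambda>k. norm (x k - u)^2"
      and e = "\<lambda>k. 3 * norm (\<omega> k)^2 + 4 * norm (\<theta> k)^2" and t = "\<lambda>k. inner (\<theta> k) (x k - u)",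
      OF convex_fun_imp_convex_on[OF Psi(3,1)] xt_dom \<gamma>(1) step]
  obtain a where a: "\<Psi> xavg = ereal a"
    using avg(1) proper_fun_finiteE[OF Psi(1)] unfolding xavg_def by blast
  obtain b where b: "\<Psi> u = ereal b"
    using False proper_fun_finiteE[OF Psi(1)] by blast
  show ?thesis using avg(2) unfolding xavg_def[symmetric] a b by simp
qed simp

theorem lemmaH1:
  fixes n :: nat and \<Psi> :: "'a::euclidean_space \<Rightarrow> ereal"
    and D :: "nat \<Rightarrow> 's measure" and Fs :: "nat \<Rightarrow> 's \<Rightarrow> 'a \<Rightarrow> 'a"
    and Fi :: "nat \<Rightarrow> 'a \<Rightarrow> 'a" and xstar :: 'a
    and K :: nat and \<beta> \<gamma> L V \<nu> :: real and lam :: "nat \<Rightarrow> real"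
    and xi1 xi2 :: "nat \<Rightarrow> nat \<Rightarrow> 's"
    and x xt gt gh :: "nat \<Rightarrow> 'a" and ht hh :: "nat \<Rightarrow> nat \<Rightarrow> 'a"
  assumes n_pos: "n \<ge> 1"
    and Psi: "proper_fun \<Psi>" "closed_fun \<Psi>" "convex_fun \<Psi>"
    and D_prob: "\<And>i. i < n \<Longrightarrow> prob_space (D i)"
    and Fs_int: "\<And>i y. i < n \<Longrightarrow> integrable (D i) (\<lambda>\<xi>. Fs i \<xi> y)"
    and Fi_def: "\<And>i y. i < n \<Longrightarrow> Fi i y = (\<integral>\<xi>. Fs i \<xi> y \<partial>D i)"
    and sol: "\<And>y. ereal (inner (avgF n Fi xstar) (y - xstar)) + \<Psi> y \<ge> \<Psi> xstar"
    and beta: "0 < \<beta>" "\<beta> \<le> 1"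
    and gamma: "0 < \<gamma>" "\<gamma> \<le> 1 / (sqrt 12 * L)"
    and V: "V \<ge> norm (x 0 - xstar)^2
              + 409600 * \<gamma>^2 * (ln (48 * real n * (real K + 1) / \<beta>))^2 / (real n)^2
                * (\<Sum>i<n. norm (Fi i xstar)^2)"
    and Lip: "\<And>i y z. i < n \<Longrightarrow> y \<in> cball xstar (4 * real n * sqrt V)
                \<Longrightarrow> z \<in> cball xstar (4 * real n * sqrt V)
                \<Longrightarrow> norm (Fi i y - Fi i z) \<le> L * norm (y - z)"
    and mono: "\<And>y z. y \<in> cball xstar (4 * real n * sqrt V)
                \<Longrightarrow> z \<in> cball xstar (4 * real n * sqrt V)
                \<Longrightarrow> inner (avgF n Fi y - avgF n Fi z) (y - z) \<ge> 0"
    and alg: "dprox_clipped_seg_shift n \<Psi> \<gamma> \<nu> lam Fs xi1 xi2 x xt ht hh gt gh"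
    and inQ: "\<And>k. k \<le> K \<Longrightarrow> x k \<in> cball xstar (4 * real n * sqrt V)
                              \<and> xt k \<in> cball xstar (4 * real n * sqrt V)"
  shows "\<forall>u \<in> cball xstar (4 * real n * sqrt V).
    (let xavg = (1 / (real K + 1)) *\<^sub>R (\<Sum>k\<le>K. xt k);
         \<theta> = (\<lambda>k. avgF n Fi (xt k) - gh k);
         \<omega> = (\<lambda>k. avgF n Fi (x k) - gt k)
     in ereal (inner (avgF n Fi u) (xavg - u)) + \<Psi> xavg
        \<le> ereal ((norm (x 0 - u)^2 - norm (x (K + 1) - u)^2) / (2 * \<gamma> * (real K + 1))
                 + \<gamma> / (real K + 1) * (\<Sum>k\<le>K. 3 * norm (\<omega> k)^2 + 4 * norm (\<theta> k)^2)
                 + 1 / (real K + 1) * (\<Sum>k\<le>K. inner (\<theta> k) (x k - u)))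
          + \<Psi> u)"
  unfolding Let_def
  using dprox_clipped_seg_shift_averaged_gap[OF n_pos Psi gamma Lip mono alg inQ] by blast

end
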